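(* Let $X$ be a set, $n\geq 1$ a natural number, and $K$ a compact subspace of the product $\mathbb{R}^X$ (product topology). Then $K$ is premetric of degree at most $n$ if and only if there exists a countable set $D_0\subseteq X$ such that the restriction map $\pi_{D_0}:K\to\{f\restriction_{D_0}: f\in K\}$, $f\mapsto f\restriction_{D_0}$, is at most $n$-to-$1$ (i.e. every point of the image has at most $n$ preimages).
   Context: A compact space $K$ is premetric of degree at most $n$ if there is a continuous surjection $f:K\to M$ onto a metrizable compact space $M$ with $|f^{-1}(x)|\leq n$ for all $x\in M$. *)

theory Defs
  imports "HOL-Analysis.Analysis"
begin

text \<open>The target space M is taken on the same carrier type as T; this loses no
generality, since any surjective image of T has cardinality at most that of T and can
hence be transported (homeomorphically) into the type of points of T.\<close>

definition premetric_deg :: "'x topology \<Rightarrow> nat \<Rightarrow> bool" where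
  "premetric_deg T n \<longleftrightarrow>
     compact_space T \<and>
     (\<exists>(M::'x topology) f.
        continuous_map T M f \<and> f ` topspace T = topspace M \<and>
        metrizable_space M \<and> compact_space M \<and>
        (\<forall>y\<in>topspace M. finite {x\<in>topspace T. f x = y} \<and>
                          card {x\<in>topspace T. f x = y} \<le> n))"

end

theory Submission
  imports Defs
begin

text \<open>If \<open>f : K \<rightarrow> M\<close> is continuous into a metric space, then for each \<open>k\<close> the pairs of points
of \<open>K\<close> whose images are at distance at least \<open>1/(k+1)\<close> form a compact subset of \<open>K \<times> K\<close>
consisting of distinct points, so by compactness finitely many coordinates already separate
all these pairs. The union of these finite sets is a countable \<open>D\<^sub>0\<close> through which \<open>f\<close>
factors, hence every fibre of the restriction to \<open>D\<^sub>0\<close> lies inside a fibre of \<open>f\<close>.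
Conversely, for countable \<open>D\<^sub>0\<close> the restriction maps \<open>K\<close> continuously onto a compact subspace
of the metrizable product \<open>\<real>\<^bsup>D\<^sub>0\<^esub>\<close>, with the prescribed fibres.\<close>

definition fibres_card_le :: "('x \<Rightarrow> 'y) \<Rightarrow> 'x set \<Rightarrow> nat \<Rightarrow> bool" where
  "fibres_card_le h A n \<longleftrightarrow>
     (\<forall>y\<in>h ` A. finite {x\<in>A. h x = y} \<and> card {x\<in>A. h x = y} \<le> n)"

lemma fibres_card_le_factor:
  assumes "fibres_card_le f A n" and "\<And>x y. \<lbrakk>x \<in> A; y \<in> A; h x = h y\<rbrakk> \<Longrightarrow> f x = f y"
  shows "fibres_card_le h A n"
  unfolding fibres_card_le_def
proof
  fix y
  assume "y \<in> h ` A"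
  then obtain x0 where x0: "x0 \<in> A" "y = h x0"
    by blast
  then have fibre: "{x\<in>A. h x = y} \<subseteq> {x\<in>A. f x = f x0}"
    using assms(2) by blast
  have "finite {x\<in>A. f x = f x0}" "card {x\<in>A. f x = f x0} \<le> n"
    using assms(1) x0(1) unfolding fibres_card_le_def by blast+
  then show "finite {x\<in>A. h x = y} \<and> card {x\<in>A. h x = y} \<le> n"
    using fibre by (meson card_mono finite_subset le_trans)
qed

lemma compactin_pairs_separated_by_finitely_many:
  assumes C: "compactin (prod_topology T T) C"
    and g: "\<And>i. i \<in> I \<Longrightarrow> continuous_map T (Y i) (g i)"
    and Hausdorff: "\<And>i. i \<in> I \<Longrightarrow> Hausdorff_space (Y i)"
    and separated: "\<And>x y. (x, y) \<in> C \<Longrightarrow> \<exists>i\<in>I. g i x \<noteq> g i y"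
  shows "\<exists>F. finite F \<and> F \<subseteq> I \<and> (\<forall>(x, y)\<in>C. \<exists>i\<in>F. g i x \<noteq> g i y)"
proof -
  define W where "W i = {p \<in> topspace (prod_topology T T). g i (fst p) \<noteq> g i (snd p)}" for i
  have "openin (prod_topology T T) (W i)" if "i \<in> I" for i
  proof -
    have "closedin (prod_topology T T)
            {p \<in> topspace (prod_topology T T). (g i \<circ> fst) p = (g i \<circ> snd) p}"
      by (rule closedin_continuous_maps_eq [OF Hausdorff [OF that]]
            continuous_map_compose [OF continuous_map_fst g [OF that]]
            continuous_map_compose [OF continuous_map_snd g [OF that]])+
    then have "openin (prod_topology T T)
                 (topspace (prod_topology T T) -
                  {p \<in> topspace (prod_topology T T). (g i \<circ> fst) p = (g i \<circ> snd) p})"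
      by (rule openin_diff [OF openin_topspace])
    moreover have "topspace (prod_topology T T) -
                     {p \<in> topspace (prod_topology T T). (g i \<circ> fst) p = (g i \<circ> snd) p} = W i"
      unfolding W_def by auto
    ultimately show ?thesis
      by simp
  qed
  moreover have "C \<subseteq> \<Union>(W ` I)"
    using compactin_subset_topspace [OF C] separated unfolding W_def by fastforce
  ultimately obtain \<V> where "finite \<V>" "\<V> \<subseteq> W ` I" "C \<subseteq> \<Union>\<V>"
    using C unfolding compactin_def by (metis (no_types, lifting) imageE)
  then obtain F where "finite F" "F \<subseteq> I" "C \<subseteq> \<Union>(W ` F)"
    by (metis finite_subset_image)
  then show ?thesis
    unfolding W_def by fastforce
qed

lemma continuous_map_metrizable_factors_through_countable_subfamily:
  assumes T: "compact_space T" and f: "continuous_map T M f" and M: "metrizable_space M"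
    and g: "\<And>i. i \<in> I \<Longrightarrow> continuous_map T (Y i) (g i)"
    and Hausdorff: "\<And>i. i \<in> I \<Longrightarrow> Hausdorff_space (Y i)"
    and separating: "\<And>x y. \<lbrakk>x \<in> topspace T; y \<in> topspace T; x \<noteq> y\<rbrakk> \<Longrightarrow> \<exists>i\<in>I. g i x \<noteq> g i y"
  shows "\<exists>D. countable D \<and> D \<subseteq> I \<and>
           (\<forall>x\<in>topspace T. \<forall>y\<in>topspace T. (\<forall>i\<in>D. g i x = g i y) \<longrightarrow> f x = f y)"
proof -
  obtain m where m: "M = mtopology_of m"
    using M unfolding metrizable_space_def by (metis Metric_space.mtopology_of)
  have f_mspace: "f x \<in> mspace m" if "x \<in> topspace T" for x
    using continuous_map_image_subset_topspace [OF f] that unfolding m by auto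
  define C where "C k = {p \<in> topspace (prod_topology T T). 1 / Suc k \<le> mdist m (f (fst p)) (f (snd p))}"
    for k :: nat
  have "\<exists>F. finite F \<and> F \<subseteq> I \<and> (\<forall>(x, y)\<in>C k. \<exists>i\<in>F. g i x \<noteq> g i y)" for k
  proof (rule compactin_pairs_separated_by_finitely_many [OF _ g Hausdorff])
    have "continuous_map (prod_topology T T) M (f \<circ> fst)" "continuous_map (prod_topology T T) M (f \<circ> snd)"
      by (rule continuous_map_compose [OF continuous_map_fst f] continuous_map_compose [OF continuous_map_snd f])+
    then have "continuous_map (prod_topology T T) euclidean (\<lambda>p. mdist m (f (fst p)) (f (snd p)))"
      unfolding m using continuous_map_mdist [of _ m "f \<circ> fst" "f \<circ> snd"] by (simp add: o_def)
    from closedin_continuous_map_preimage [OF this, of "{1 / Suc k..}"]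
    have "closedin (prod_topology T T) (C k)"
      unfolding C_def by simp
    then show "compactin (prod_topology T T) (C k)"
      using T by (simp add: closedin_compact_space compact_space_prod_topology)
    show "\<exists>i\<in>I. g i x \<noteq> g i y" if "(x, y) \<in> C k" for x y
    proof (rule separating)
      show "x \<in> topspace T" "y \<in> topspace T"
        using that unfolding C_def by auto
      have "mdist m (f x) (f x) = 0"
        using that f_mspace unfolding C_def by auto
      then show "x \<noteq> y"
        using that unfolding C_def by auto
    qed
  qed
  then obtain F where F: "\<And>k. finite (F k) \<and> F k \<subseteq> I \<and> (\<forall>(x, y)\<in>C k. \<exists>i\<in>F k. g i x \<noteq> g i y)"
    using choice [of "\<lambda>k F. finite F \<and> F \<subseteq> I \<and> (\<forall>(x, y)\<in>C k. \<exists>i\<in>F. g i x \<noteq> g i y)"] by blast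
  show ?thesis
  proof (intro exI conjI ballI impI)
    show "countable (\<Union>k. F k)" "(\<Union>k. F k) \<subseteq> I"
      using F by (auto intro: countable_finite)
    fix x y
    assume x: "x \<in> topspace T" and y: "y \<in> topspace T" and agree: "\<forall>i\<in>(\<Union>k. F k). g i x = g i y"
    show "f x = f y"
    proof (rule ccontr)
      assume "f x \<noteq> f y"
      have "0 < mdist m (f x) (f y)"
        by (rule Metric_space.mdist_pos_less [OF Metric_space_mspace_mdist])
           (use \<open>f x \<noteq> f y\<close> f_mspace x y in auto)
      then obtain k where "inverse (Suc k) < mdist m (f x) (f y)"
        using reals_Archimedean by blast
      then have "(x, y) \<in> C k"
        unfolding C_def using x y by (simp add: divide_inverse)
      then show False
        using F agree by blast
    qed
  qed
qed

lemma premetric_deg_imp_restriction_fibres_card_le: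
  assumes premetric: "premetric_deg (subtopology (product_topology Y X) K) n"
    and K: "K \<subseteq> topspace (product_topology Y X)"
    and Hausdorff: "\<And>i. i \<in> X \<Longrightarrow> Hausdorff_space (Y i)"
  shows "\<exists>D. D \<subseteq> X \<and> countable D \<and> fibres_card_le (\<lambda>x. restrict x D) K n"
proof -
  let ?T = "subtopology (product_topology Y X) K"
  have topspace_T: "topspace ?T = K"
    using K by auto
  have compact_T: "compact_space ?T"
    using premetric unfolding premetric_deg_def by blast
  obtain M :: "('a \<Rightarrow> 'b) topology" and f where
    f: "continuous_map ?T M f" "f ` topspace ?T = topspace M" and M: "metrizable_space M"
    and fibres: "\<forall>y\<in>topspace M. finite {x\<in>topspace ?T. f x = y} \<and> card {x\<in>topspace ?T. f x = y} \<le> n"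
    using premetric unfolding premetric_deg_def by blast
  have "fibres_card_le f K n"
    unfolding fibres_card_le_def
  proof
    fix y
    assume "y \<in> f ` K"
    then have "y \<in> topspace M"
      using f(2) topspace_T by simp
    then show "finite {x\<in>K. f x = y} \<and> card {x\<in>K. f x = y} \<le> n"
      using fibres unfolding topspace_T by blast
  qed
  have coordinates: "continuous_map ?T (Y i) (\<lambda>x. x i)" if "i \<in> X" for i
    using continuous_map_from_subtopology [OF continuous_map_product_projection [OF that]] .
  have separating: "\<exists>i\<in>X. x i \<noteq> y i" if "x \<in> topspace ?T" "y \<in> topspace ?T" "x \<noteq> y" for x y
  proof (rule ccontr)
    assume "\<not> (\<exists>i\<in>X. x i \<noteq> y i)"
    moreover have "x \<in> extensional X" "y \<in> extensional X"
      using that K by (auto simp: topspace_T PiE_def)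
    ultimately have "x = y"
      by (intro extensionalityI) auto
    with \<open>x \<noteq> y\<close> show False ..
  qed
  have "\<exists>D. countable D \<and> D \<subseteq> X \<and>
              (\<forall>x\<in>topspace ?T. \<forall>y\<in>topspace ?T. (\<forall>i\<in>D. x i = y i) \<longrightarrow> f x = f y)"
    by (rule continuous_map_metrizable_factors_through_countable_subfamily
               [OF compact_T f(1) M coordinates Hausdorff separating])
  then obtain D where D: "countable D" "D \<subseteq> X"
    and factor: "\<forall>x\<in>K. \<forall>y\<in>K. (\<forall>i\<in>D. x i = y i) \<longrightarrow> f x = f y"
    unfolding topspace_T by blast
  have "fibres_card_le (\<lambda>x. restrict x D) K n"
  proof (rule fibres_card_le_factor [OF \<open>fibres_card_le f K n\<close>])
    fix x y
    assume x: "x \<in> K" and y: "y \<in> K" and restrict_eq: "restrict x D = restrict y D"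
    have "x i = y i" if "i \<in> D" for i
      using fun_cong [OF restrict_eq, of i] that by simp
    then show "f x = f y"
      using factor x y by blast
  qed
  then show ?thesis
    using D by (intro exI [of _ D] conjI)
qed

lemma restriction_fibres_card_le_imp_premetric_deg:
  assumes K: "compactin (product_topology Y X) K"
    and metrizable: "\<And>i. i \<in> X \<Longrightarrow> metrizable_space (Y i)"
    and D: "D \<subseteq> X" "countable D"
    and fibres: "fibres_card_le (\<lambda>x. restrict x D) K n"
  shows "premetric_deg (subtopology (product_topology Y X) K) n"
proof -
  let ?T = "subtopology (product_topology Y X) K"
  let ?M = "subtopology (product_topology Y D) ((\<lambda>x. restrict x D) ` K)"
  have topspace_T: "topspace ?T = K"
    using compactin_subset_topspace [OF K] by auto
  have compact_T: "compact_space ?T"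
    using K by (rule compact_space_subtopology)
  have restrict: "continuous_map ?T (product_topology Y D) (\<lambda>x. restrict x D)"
    using continuous_map_from_subtopology [OF continuous_on_restrict [OF D(1)]] .
  have image: "(\<lambda>x. restrict x D) ` K \<subseteq> topspace (product_topology Y D)"
    using restrict topspace_T by (metis continuous_map_image_subset_topspace)
  have metrizable_M: "metrizable_space ?M"
    using metrizable D by (intro metrizable_space_subtopology)
      (auto simp: metrizable_space_product_topology intro: countable_subset)
  have compact_M: "compact_space ?M"
    using image_compactin [OF compact_T [unfolded compact_space_def] restrict] topspace_T
    by (simp add: compact_space_subtopology)
  have continuous_M: "continuous_map ?T ?M (\<lambda>x. restrict x D)"
    using restrict topspace_T by (simp add: continuous_map_in_subtopology)
  have topspace_M: "topspace ?M = (\<lambda>x. restrict x D) ` K"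
    using image by auto
  have fibres_M: "\<forall>y\<in>topspace ?M. finite {x\<in>topspace ?T. restrict x D = y} \<and>
                                  card {x\<in>topspace ?T. restrict x D = y} \<le> n"
    using fibres unfolding fibres_card_le_def topspace_M topspace_T .
  show ?thesis
    unfolding premetric_deg_def
  proof (intro conjI exI)
    show "continuous_map ?T ?M (\<lambda>x. restrict x D)" "metrizable_space ?M" "compact_space ?M"
      by (fact continuous_M metrizable_M compact_M)+
    show "(\<lambda>x. restrict x D) ` topspace ?T = topspace ?M"
      unfolding topspace_T topspace_M ..
  qed (use compact_T fibres_M in auto)
qed

theorem mainTheorem2:
  fixes X :: "'a set" and n :: nat and K :: "('a \<Rightarrow> real) set"
  assumes "n \<ge> 1"
    and "compactin (product_topology (\<lambda>_. euclideanreal) X) K"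
  shows "premetric_deg (subtopology (product_topology (\<lambda>_. euclideanreal) X) K) n \<longleftrightarrow>
         (\<exists>D0. D0 \<subseteq> X \<and> countable D0 \<and>
            (\<forall>g\<in>(\<lambda>f. restrict f D0) ` K.
               finite {f\<in>K. restrict f D0 = g} \<and> card {f\<in>K. restrict f D0 = g} \<le> n))"
proof
  assume premetric: "premetric_deg (subtopology (product_topology (\<lambda>_. euclideanreal) X) K) n"
  have "K \<subseteq> topspace (product_topology (\<lambda>_. euclideanreal) X)"
    using assms(2) by (rule compactin_subset_topspace)
  from premetric_deg_imp_restriction_fibres_card_le [OF premetric this Hausdorff_space_euclidean]
  show "\<exists>D0. D0 \<subseteq> X \<and> countable D0 \<and>
               (\<forall>g\<in>(\<lambda>f. restrict f D0) ` K.
                  finite {f\<in>K. restrict f D0 = g} \<and> card {f\<in>K. restrict f D0 = g} \<le> n)"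
    unfolding fibres_card_le_def .
next
  assume "\<exists>D0. D0 \<subseteq> X \<and> countable D0 \<and>
            (\<forall>g\<in>(\<lambda>f. restrict f D0) ` K.
               finite {f\<in>K. restrict f D0 = g} \<and> card {f\<in>K. restrict f D0 = g} \<le> n)"
  then obtain D0 where "D0 \<subseteq> X" "countable D0" "fibres_card_le (\<lambda>f. restrict f D0) K n"
    unfolding fibres_card_le_def by blast
  then show "premetric_deg (subtopology (product_topology (\<lambda>_. euclideanreal) X) K) n"
    by (rule restriction_fibres_card_le_imp_premetric_deg [OF assms(2) metrizable_space_euclidean])
qed

end
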